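(* Every Move-To-Front-Every-Other-Access algorithm $A$ (for any choice of initial bits) has competitive ratio at most $2.5$: there is a constant $b$ (depending only on the list length) such that $A(\sigma)\le 2.5\cdot\mathrm{OPT}(\sigma)+b$ for every request sequence $\sigma$, in both the partial and the full cost model.
   Context: Static list update: a list of $l$ distinct items in some initial order; serving a request to the item at position $i$ (from the front) costs $i$ in the full cost model and $i-1$ in the partial cost model; the accessed item may be moved closer to the front for free (free exchange); two adjacent items may be swapped at cost $1$ (paid exchange). $A(\sigma)$ is the total cost of algorithm $A$ and $\mathrm{OPT}(\sigma)$ the minimum cost of any offline algorithm from the same initial list (in the same cost model). A Move-To-Front-Every-Other-Access (MTF2) algorithm maintains one bit per item, with arbitrary initial values; on each request to an item $z$ it flips the bit of $z$, and if the bit becomes $0$ it moves $z$ to the front (free exchange), otherwise it leaves the list unchanged; it makes no paid exchanges. *)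

theory Defs
  imports Complex_Main
begin

text \<open>Static list update. Lists are 'a list with distinct entries; positions are
0-based internally, so the item at 0-based index i is at position i+1 from the front.\<close>

definition idx :: "'a list \<Rightarrow> 'a \<Rightarrow> nat" where
  "idx xs q = length (takeWhile (\<lambda>y. y \<noteq> q) xs)"

text \<open>Cost of accessing q in list xs: position (full model) or position - 1 (partial model).\<close>
definition acc_cost :: "bool \<Rightarrow> 'a list \<Rightarrow> 'a \<Rightarrow> nat" where
  "acc_cost full xs q = idx xs q + (if full then 1 else 0)"

text \<open>Paid exchange: swap the adjacent items at 0-based indices i and i+1
(no-op, but still charged, if i+1 is out of range).\<close>
definition swap :: "nat \<Rightarrow> 'a list \<Rightarrow> 'a list" where
  "swap i xs = (if Suc i < length xs then xs[i := xs ! Suc i, Suc i := xs ! i] else xs)"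

text \<open>Free exchange: move the accessed item q forward by m positions
(to the front if m exceeds its index).\<close>
definition mvfwd :: "nat \<Rightarrow> 'a \<Rightarrow> 'a list \<Rightarrow> 'a list" where
  "mvfwd m q xs = (let k = idx xs q; ys = remove1 q xs
                   in take (k - m) ys @ q # drop (k - m) ys)"

text \<open>General (offline) algorithm: for each request an action (m, sws): first the paid
exchanges sws are performed (cost 1 each), then the request is served at the cost of its
current position, then the item is moved forward by m positions for free.\<close>
fun offline_cost :: "bool \<Rightarrow> 'a list \<Rightarrow> 'a list \<Rightarrow> (nat \<times> nat list) list \<Rightarrow> nat" where
  "offline_cost full xs (q # qs) ((m, sws) # as) =
     (let xs' = foldl (\<lambda>l i. swap i l) xs sws
      in length sws + acc_cost full xs' q + offline_cost full (mvfwd m q xs') qs as)"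
| "offline_cost full xs qs as = 0"

definition OPT :: "bool \<Rightarrow> 'a list \<Rightarrow> 'a list \<Rightarrow> nat" where
  "OPT full s \<sigma> = (LEAST c. \<exists>as. length as = length \<sigma> \<and> offline_cost full s \<sigma> as = c)"

text \<open>MTF2 with bit vector bits (True = 1, False = 0): on a request to q flip its bit;
if the bit becomes 0 move q to the front (free exchange), otherwise leave the list.\<close>
fun mtf2 :: "bool \<Rightarrow> ('a \<Rightarrow> bool) \<Rightarrow> 'a list \<Rightarrow> 'a list \<Rightarrow> nat" where
  "mtf2 full bits xs [] = 0"
| "mtf2 full bits xs (q # qs) =
     (let b = \<not> bits q
      in acc_cost full xs q
         + mtf2 full (bits(q := b)) (if b then xs else mvfwd (idx xs q) q xs) qs)"

end

theory Submission
  imports Defs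
begin

(* Run MTF2 on list L and an arbitrary offline algorithm on list M, both starting from s.
   The potential Phi is a sum over ordered pairs (x, y) with x in front of y in L: such a pair
   weighs bit(y) if x is also in front of y in M, and 4 - 2 bit(y) + bit(x) if the pair is
   inverted in M.  All weights lie in 0..5, and an unordered pair contributes at most 5.
   We show that per request
     - every paid exchange of the offline algorithm raises Phi by at most 5, and
     - serving q, where q has index i in L and j in M, satisfies 2 i + Delta Phi <= 5 j;
       this reduces to a finite check on each pair {q, y}, summed over y.
   Summing over the request sequence gives 2 MTF2(sigma) <= 5 ALG(sigma) + Phi_0, and
   0 <= Phi_0 <= 5 l^2.  Applying this to an optimal offline algorithm proves the theorem
   with additive constant b = 5/2 l^2, in either cost model. *)


section \<open>Positions in a list\<close>

abbreviation precedes :: "'a list \<Rightarrow> 'a \<Rightarrow> 'a \<Rightarrow> bool" where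
  "precedes xs x y \<equiv> idx xs x < idx xs y"

lemma idx_Nil [simp]: "idx [] q = 0"
  by (simp add: idx_def)

lemma idx_Cons: "idx (x # xs) q = (if x = q then 0 else Suc (idx xs q))"
  by (simp add: idx_def)

lemma idx_append: "idx (us @ vs) q = (if q \<in> set us then idx us q else length us + idx vs q)"
  by (induction us) (auto simp: idx_Cons)

lemma idx_less_length: "q \<in> set xs \<Longrightarrow> idx xs q < length xs"
  by (induction xs) (auto simp: idx_Cons)

lemma nth_idx: "q \<in> set xs \<Longrightarrow> xs ! idx xs q = q"
  by (induction xs) (auto simp: idx_Cons)

lemma precedes_total:
  assumes "x \<in> set xs" "y \<in> set xs" "x \<noteq> y"
  shows "precedes xs x y \<longleftrightarrow> \<not> precedes xs y x"
  using assms nth_idx[of x xs] nth_idx[of y xs] by (metis less_linear less_not_sym)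

text \<open>The index of q counts the items in front of it; this turns sums over pairs into
  access costs.\<close>
lemma idx_eq_card_precedes:
  assumes "distinct xs" "q \<in> set xs"
  shows "idx xs q = card (set xs \<inter> {y. precedes xs y q})"
proof -
  obtain us vs where xs: "xs = us @ q # vs" "q \<notin> set us"
    using split_list_first[OF assms(2)] by blast
  have "set xs \<inter> {y. precedes xs y q} = set us"
    using xs by (auto simp: idx_append idx_Cons idx_less_length split: if_splits)
  moreover have "distinct us" using assms xs by simp
  ultimately show ?thesis using xs by (simp add: idx_append idx_Cons distinct_card)
qed


section \<open>Free exchanges as insertion\<close>

text \<open>Inserting q at index j.  Moving an item forward (free exchange) removes it and
  re-inserts it at a smaller index.\<close>
abbreviation insert_at :: "nat \<Rightarrow> 'a \<Rightarrow> 'a list \<Rightarrow> 'a list" where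
  "insert_at j q ys \<equiv> take j ys @ q # drop j ys"

lemma idx_insert_at_other:
  assumes "y \<noteq> q" "j \<le> length ys"
  shows "idx (insert_at j q ys) y = (if idx ys y < j then idx ys y else Suc (idx ys y))"
proof -
  have ys: "idx ys y = (if y \<in> set (take j ys) then idx (take j ys) y else j + idx (drop j ys) y)"
    using idx_append[of "take j ys" "drop j ys" y] assms(2) by simp
  show ?thesis
  proof (cases "y \<in> set (take j ys)")
    case True
    then have "idx (take j ys) y < j" using idx_less_length[OF True] assms(2) by simp
    then show ?thesis using True ys by (simp add: idx_append)
  next
    case False
    then show ?thesis using ys assms by (simp add: idx_append idx_Cons)
  qed
qed

lemma idx_insert_at_self: "q \<notin> set ys \<Longrightarrow> j \<le> length ys \<Longrightarrow> idx (insert_at j q ys) q = j"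
  using set_take_subset[of j ys] by (auto simp: idx_append idx_Cons)

lemma set_insert_at: "set (insert_at j q ys) = insert q (set ys)"
  by (metis Un_insert_right append_take_drop_id list.simps(15) set_append)

lemma distinct_insert_at: "distinct ys \<Longrightarrow> q \<notin> set ys \<Longrightarrow> distinct (insert_at j q ys)"
  using set_take_subset[of j ys] set_drop_subset[of j ys]
    set_take_disj_set_drop_if_distinct[of ys j j]
  by auto

lemma insert_at_idx_remove1:
  assumes "q \<in> set xs"
  shows "xs = insert_at (idx xs q) q (remove1 q xs)"
proof -
  obtain us vs where "xs = us @ q # vs" "q \<notin> set us"
    using split_list_first[OF assms] by blast
  then show ?thesis by (simp add: idx_append idx_Cons remove1_append)
qed

lemma precedes_insert_at_other:
  "y \<noteq> q \<Longrightarrow> z \<noteq> q \<Longrightarrow> j \<le> length ys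
    \<Longrightarrow> precedes (insert_at j q ys) y z \<longleftrightarrow> precedes ys y z"
  by (auto simp: idx_insert_at_other)

lemma precedes_insert_at_self:
  "y \<noteq> q \<Longrightarrow> q \<notin> set ys \<Longrightarrow> j \<le> length ys
    \<Longrightarrow> precedes (insert_at j q ys) y q \<longleftrightarrow> idx ys y < j"
  by (auto simp: idx_insert_at_other idx_insert_at_self)

lemma mvfwd_to_front: "idx (mvfwd (idx xs q) q xs) q = 0"
  by (simp add: mvfwd_def Let_def idx_Cons)

context
  fixes xs :: "'a list" and q :: 'a
  assumes dist: "distinct xs" and mem: "q \<in> set xs"
begin

private lemma mvfwd_as_reinsertion:
  obtains ys k where "q \<notin> set ys" "distinct ys" "k \<le> length ys"
    "xs = insert_at k q ys" "mvfwd m q xs = insert_at (k - m) q ys"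
proof (rule that[of "remove1 q xs" "idx xs q"])
  show "q \<notin> set (remove1 q xs)" "distinct (remove1 q xs)" "idx xs q \<le> length (remove1 q xs)"
    using dist mem idx_less_length[OF mem] by (auto simp: length_remove1)
  show "xs = insert_at (idx xs q) q (remove1 q xs)"
    by (rule insert_at_idx_remove1[OF mem])
  show "mvfwd m q xs = insert_at (idx xs q - m) q (remove1 q xs)"
    by (simp add: mvfwd_def Let_def)
qed

lemma set_mvfwd: "set (mvfwd m q xs) = set xs"
proof -
  obtain ys k where "xs = insert_at k q ys" "mvfwd m q xs = insert_at (k - m) q ys"
    by (rule mvfwd_as_reinsertion)
  then show ?thesis by (simp only: set_insert_at)
qed

lemma distinct_mvfwd: "distinct (mvfwd m q xs)"
proof -
  obtain ys k where "q \<notin> set ys" "distinct ys" "mvfwd m q xs = insert_at (k - m) q ys"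
    by (rule mvfwd_as_reinsertion)
  then show ?thesis using distinct_insert_at[of ys q "k - m"] by simp
qed

lemma mvfwd_precedes_other:
  assumes "y \<noteq> q" "z \<noteq> q"
  shows "precedes (mvfwd m q xs) y z \<longleftrightarrow> precedes xs y z"
proof -
  obtain ys k where "k \<le> length ys" "xs = insert_at k q ys" "mvfwd m q xs = insert_at (k - m) q ys"
    by (rule mvfwd_as_reinsertion)
  then show ?thesis using assms by (simp add: precedes_insert_at_other)
qed

lemma mvfwd_precedes_self:
  assumes "y \<noteq> q" "precedes (mvfwd m q xs) y q"
  shows "precedes xs y q"
proof -
  obtain ys k where "q \<notin> set ys" "k \<le> length ys"
    "xs = insert_at k q ys" "mvfwd m q xs = insert_at (k - m) q ys"
    by (rule mvfwd_as_reinsertion)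
  then show ?thesis using assms by (simp add: precedes_insert_at_self)
qed

end


section \<open>Paid exchanges\<close>

lemma swap_adjacent:
  assumes "Suc i < length ys"
  obtains us a b ws where "ys = us @ a # b # ws" "swap i ys = us @ b # a # ws"
proof -
  define us a b ws where "us = take i ys" "a = ys ! i" "b = ys ! Suc i"
    "ws = drop (Suc (Suc i)) ys"
  have ys: "ys = us @ a # b # ws"
    using assms unfolding us_a_b_ws_def
    by (metis Cons_nth_drop_Suc Suc_lessD append_take_drop_id)
  have "length us = i" using assms us_a_b_ws_def(1) by simp
  then have "swap i (us @ a # b # ws) = us @ b # a # ws"
    by (simp add: swap_def list_update_append nth_append)
  with ys show ?thesis using that by simp
qed

lemma set_swap: "set (swap i ys) = set ys"
proof (cases "Suc i < length ys")
  case True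
  then obtain us a b ws where "ys = us @ a # b # ws" "swap i ys = us @ b # a # ws"
    by (rule swap_adjacent)
  then show ?thesis by auto
qed (simp add: swap_def)

lemma distinct_swap:
  assumes "distinct ys"
  shows "distinct (swap i ys)"
proof (cases "Suc i < length ys")
  case True
  then obtain us a b ws where "ys = us @ a # b # ws" "swap i ys = us @ b # a # ws"
    by (rule swap_adjacent)
  then show ?thesis using assms by auto
qed (simp add: swap_def assms)

lemma precedes_transpose:
  assumes "distinct (us @ a # b # ws)" "x \<noteq> y" "{x, y} \<noteq> {a, b}"
    "x \<in> set (us @ a # b # ws)" "y \<in> set (us @ a # b # ws)"
  shows "precedes (us @ b # a # ws) x y \<longleftrightarrow> precedes (us @ a # b # ws) x y"
  using assms by (auto simp: idx_append idx_Cons dest: idx_less_length)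

lemma set_swaps: "set (foldl (\<lambda>l i. swap i l) ys sws) = set ys"
  by (induction sws arbitrary: ys) (simp_all add: set_swap)

lemma distinct_swaps: "distinct ys \<Longrightarrow> distinct (foldl (\<lambda>l i. swap i l) ys sws)"
  by (induction sws arbitrary: ys) (simp_all add: distinct_swap)


section \<open>One step of MTF2\<close>

definition mtf2_step :: "('a \<Rightarrow> bool) \<Rightarrow> 'a list \<Rightarrow> 'a \<Rightarrow> 'a list" where
  "mtf2_step bits xs q = (if bits q then mvfwd (idx xs q) q xs else xs)"

lemma mtf2_Cons_step:
  "mtf2 full bits xs (q # qs)
     = acc_cost full xs q + mtf2 full (bits(q := \<not> bits q)) (mtf2_step bits xs q) qs"
  by (simp add: mtf2_step_def)

lemma mtf2_step_precedes_self:
  "precedes (mtf2_step bits xs q) y q \<longleftrightarrow> \<not> bits q \<and> precedes xs y q"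
  by (simp add: mtf2_step_def mvfwd_to_front)

context
  fixes xs :: "'a list" and q :: 'a
  assumes dist: "distinct xs" and mem: "q \<in> set xs"
begin

lemma set_mtf2_step: "set (mtf2_step bits xs q) = set xs"
  by (simp add: mtf2_step_def set_mvfwd[OF dist mem])

lemma distinct_mtf2_step: "distinct (mtf2_step bits xs q)"
  by (simp add: mtf2_step_def distinct_mvfwd[OF dist mem] dist)

lemma mtf2_step_precedes_other:
  "y \<noteq> q \<Longrightarrow> z \<noteq> q \<Longrightarrow> precedes (mtf2_step bits xs q) y z \<longleftrightarrow> precedes xs y z"
  by (simp add: mtf2_step_def mvfwd_precedes_other[OF dist mem])

end


section \<open>The potential\<close>

text \<open>Weight of a pair (x, y) with x in front of y in the MTF2 list, given the bits of x and y
  and whether the offline list agrees on their order.\<close>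
definition pair_weight :: "bool \<Rightarrow> bool \<Rightarrow> bool \<Rightarrow> int" where
  "pair_weight bx bz agree = (if agree then of_bool bz else 4 - 2 * of_bool bz + of_bool bx)"

definition pot :: "('a \<Rightarrow> bool) \<Rightarrow> 'a list \<Rightarrow> 'a list \<Rightarrow> 'a \<Rightarrow> 'a \<Rightarrow> int" where
  "pot bits xs ys x y =
     (if x \<noteq> y \<and> precedes xs x y then pair_weight (bits x) (bits y) (precedes ys x y) else 0)"

definition Phi :: "'a set \<Rightarrow> ('a \<Rightarrow> bool) \<Rightarrow> 'a list \<Rightarrow> 'a list \<Rightarrow> int" where
  "Phi S bits xs ys = (\<Sum>x\<in>S. \<Sum>y\<in>S. pot bits xs ys x y)"

text \<open>Joint weight of an unordered pair {q, y}, in terms of whether y is in front of q in the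
  MTF2 list (a) and in the offline list (c).\<close>
definition pair_pot :: "bool \<Rightarrow> bool \<Rightarrow> bool \<Rightarrow> bool \<Rightarrow> int" where
  "pair_pot bq bz a c = (if a then pair_weight bz bq c else pair_weight bq bz (\<not> c))"

lemma pot_nonneg: "pot bits xs ys x y \<ge> 0"
  by (simp add: pot_def pair_weight_def)

lemma pot_le_5: "pot bits xs ys x y \<le> 5"
  by (simp add: pot_def pair_weight_def)

text \<open>At most one of x, y precedes the other, so a pair contributes at most 5 in total.\<close>
lemma pot_pair_le_5: "pot bits xs ys x y + pot bits xs ys y x \<le> 5"
  by (auto simp: pot_def pair_weight_def)

lemma pot_pair:
  assumes "q \<noteq> y" "q \<in> set xs" "y \<in> set xs" "q \<in> set ys" "y \<in> set ys"
  shows "pot bits xs ys q y + pot bits xs ys y q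
           = pair_pot (bits q) (bits y) (precedes xs y q) (precedes ys y q)"
  using assms precedes_total[of q xs y] precedes_total[of q ys y]
  by (auto simp: pot_def pair_pot_def)

lemma Phi_nonneg: "Phi S bits xs ys \<ge> 0"
  unfolding Phi_def by (intro sum_nonneg) (simp add: pot_nonneg)

lemma Phi_le: "Phi S bits xs ys \<le> 5 * int (card S) * int (card S)"
proof -
  have "Phi S bits xs ys \<le> (\<Sum>x\<in>S. \<Sum>y\<in>S. 5)"
    unfolding Phi_def by (intro sum_mono) (simp add: pot_le_5)
  then show ?thesis by simp
qed

text \<open>MTF2 flips bit(q) and moves q to the front iff the new bit is 0, so y stays in front of q
  iff it was and the new bit is 1; the offline algorithm only moves q forward.\<close>
lemma pair_pot_access:
  assumes "a' \<longleftrightarrow> \<not> bq \<and> a" "c' \<longrightarrow> c"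
  shows "2 * of_bool a + pair_pot (\<not> bq) bz a' c' - pair_pot bq bz a c \<le> 5 * (of_bool c :: int)"
  using assms
  by (cases a; cases c; cases c'; cases bq; cases bz) (auto simp: pair_pot_def pair_weight_def)


lemma sum_pairs_through:
  fixes D :: "'a \<Rightarrow> 'a \<Rightarrow> 'b::comm_monoid_add"
  assumes "finite S" "q \<in> S" "D q q = 0"
    and "\<And>x y. x \<in> S \<Longrightarrow> y \<in> S \<Longrightarrow> x \<noteq> q \<Longrightarrow> y \<noteq> q \<Longrightarrow> D x y = 0"
  shows "(\<Sum>x\<in>S. \<Sum>y\<in>S. D x y) = (\<Sum>y\<in>S. D q y + D y q)"
proof -
  have row: "(\<Sum>y\<in>S. D x y) = D x q" if "x \<in> S - {q}" for x
  proof -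
    have "(\<Sum>y\<in>S - {q}. D x y) = 0" using assms(4) that by (intro sum.neutral) auto
    then show ?thesis using assms(1,2) by (simp add: sum.remove)
  qed
  have "(\<Sum>x\<in>S. \<Sum>y\<in>S. D x y) = (\<Sum>y\<in>S. D q y) + (\<Sum>x\<in>S - {q}. \<Sum>y\<in>S. D x y)"
    by (rule sum.remove[OF assms(1,2)])
  also have "(\<Sum>x\<in>S - {q}. \<Sum>y\<in>S. D x y) = (\<Sum>x\<in>S - {q}. D x q)"
    using row by (rule sum.cong[OF refl])
  also have "\<dots> = (\<Sum>x\<in>S. D x q)"
    using sum.remove[OF assms(1,2), of "\<lambda>x. D x q"] assms(3) by simp
  finally show ?thesis by (simp add: sum.distrib)
qed


section \<open>Amortized cost of one request\<close>

text \<open>A single paid exchange raises the potential by at most 5: only the transposed pair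
  changes its contribution.\<close>
lemma Phi_swap:
  assumes "distinct ys" "set ys = S"
  shows "Phi S bits xs (swap i ys) \<le> Phi S bits xs ys + 5"
proof (cases "Suc i < length ys")
  case False
  then show ?thesis by (simp add: swap_def)
next
  case True
  then obtain us a b ws where ys: "ys = us @ a # b # ws" and sw: "swap i ys = us @ b # a # ws"
    by (rule swap_adjacent)
  have fin: "finite S" using assms by auto
  define D where "D x y = pot bits xs (swap i ys) x y - pot bits xs ys x y" for x y
  have D0: "D x y = 0" if "(x, y) \<in> S \<times> S - {(a, b), (b, a)}" for x y
  proof (cases "x = y")
    case False
    have "{x, y} \<noteq> {a, b}" using that by (auto simp: doubleton_eq_iff)
    moreover have "x \<in> set ys" "y \<in> set ys" using that assms by auto
    ultimately have "precedes (swap i ys) x y \<longleftrightarrow> precedes ys x y"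
      unfolding sw using False assms(1) precedes_transpose[of us a b ws x y] by (simp add: ys)
    then show ?thesis unfolding D_def pot_def by simp
  qed (simp add: D_def pot_def)
  have ab: "a \<noteq> b" "(a, b) \<in> S \<times> S" "(b, a) \<in> S \<times> S" using assms ys by auto
  have "Phi S bits xs (swap i ys) - Phi S bits xs ys = (\<Sum>(x, y)\<in>S \<times> S. D x y)"
    unfolding Phi_def D_def sum.cartesian_product by (simp add: split_def sum_subtractf)
  also have "\<dots> = (\<Sum>(x, y)\<in>{(a, b), (b, a)}. D x y)"
    using D0 fin ab by (intro sum.mono_neutral_right) auto
  also have "\<dots> = D a b + D b a" using ab by simp
  also have "\<dots> \<le> 5"
    using pot_pair_le_5[of bits xs "swap i ys" a b]
      pot_nonneg[of bits xs ys a b] pot_nonneg[of bits xs ys b a]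
    unfolding D_def by linarith
  finally show ?thesis by simp
qed

lemma Phi_swaps:
  assumes "distinct ys" "set ys = S"
  shows "Phi S bits xs (foldl (\<lambda>l i. swap i l) ys sws) \<le> Phi S bits xs ys + 5 * int (length sws)"
  using assms
proof (induction sws arbitrary: ys)
  case (Cons i sws)
  have "distinct (swap i ys)" "set (swap i ys) = S"
    using Cons.prems by (auto simp: distinct_swap set_swap)
  then show ?case using Cons.IH Phi_swap[OF Cons.prems, of bits xs i] by fastforce
qed simp

lemma pot_pair_access:
  fixes bits :: "'a \<Rightarrow> bool" and m :: nat
  assumes "distinct xs" "distinct ys" "set xs = set ys" "q \<in> set xs" "y \<in> set xs" "y \<noteq> q"
  defines "bits' \<equiv> bits(q := \<not> bits q)" and "xs' \<equiv> mtf2_step bits xs q" and "ys' \<equiv> mvfwd m q ys"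
  shows "2 * of_bool (precedes xs y q) + (pot bits' xs' ys' q y + pot bits' xs' ys' y q)
           - (pot bits xs ys q y + pot bits xs ys y q) \<le> 5 * of_bool (precedes ys y q)"
proof -
  have qy: "q \<in> set ys" using assms(3,4) by simp
  have sets: "set xs' = set xs" "set ys' = set xs"
    using set_mtf2_step[OF assms(1,4)] set_mvfwd[OF assms(2) qy] assms(3)
    by (simp_all add: xs'_def ys'_def)
  have "precedes xs' y q \<longleftrightarrow> \<not> bits q \<and> precedes xs y q"
    unfolding xs'_def by (rule mtf2_step_precedes_self)
  moreover have "precedes ys' y q \<longrightarrow> precedes ys y q"
    using mvfwd_precedes_self[OF assms(2) qy assms(6)] by (simp add: ys'_def)
  ultimately show ?thesis
    using pair_pot_access[of "precedes xs' y q" "bits q" "precedes xs y q"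
        "precedes ys' y q" "precedes ys y q" "bits y"]
      pot_pair[of q y xs' ys' bits'] pot_pair[of q y xs ys bits] assms(3-6) sets qy
    by (simp add: bits'_def)
qed

text \<open>Only pairs involving q change their weight; sum pot_pair_access over y.\<close>
lemma Phi_access:
  assumes "distinct xs" "distinct ys" "set xs = S" "set ys = S" "q \<in> S"
  shows "2 * int (idx xs q) + Phi S (bits(q := \<not> bits q)) (mtf2_step bits xs q) (mvfwd m q ys)
           \<le> 5 * int (idx ys q) + Phi S bits xs ys"
proof -
  define bits' where "bits' = bits(q := \<not> bits q)"
  define xs' where "xs' = mtf2_step bits xs q"
  define ys' where "ys' = mvfwd m q ys"
  have fin: "finite S" using assms by auto
  have qx: "q \<in> set xs" and qy: "q \<in> set ys" using assms by auto
  define D where "D x y = pot bits' xs' ys' x y - pot bits xs ys x y" for x y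
  have D_other: "D x y = 0" if "x \<noteq> q" "y \<noteq> q" for x y
    using that mtf2_step_precedes_other[OF assms(1) qx] mvfwd_precedes_other[OF assms(2) qy]
    by (simp add: D_def pot_def bits'_def xs'_def ys'_def)
  have D_qq: "D q q = 0" by (simp add: D_def pot_def)
  have D_pair: "D q y + D y q \<le> 5 * of_bool (precedes ys y q) - 2 * of_bool (precedes xs y q)"
    if "y \<in> S" for y
  proof (cases "y = q")
    case False
    then show ?thesis
      using pot_pair_access[OF assms(1,2) _ qx _ False, of bits m] that assms(3,4)
      unfolding D_def bits'_def xs'_def ys'_def by simp
  qed (simp add: D_qq)
  have "Phi S bits' xs' ys' - Phi S bits xs ys = (\<Sum>x\<in>S. \<Sum>y\<in>S. D x y)"
    unfolding Phi_def D_def by (simp add: sum_subtractf)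
  also have "\<dots> = (\<Sum>y\<in>S. D q y + D y q)"
    using fin assms(5) D_qq D_other by (rule sum_pairs_through)
  also have "\<dots> \<le> (\<Sum>y\<in>S. 5 * of_bool (precedes ys y q) - 2 * of_bool (precedes xs y q))"
    using D_pair by (rule sum_mono)
  also have "\<dots> = 5 * int (idx ys q) - 2 * int (idx xs q)"
    using fin idx_eq_card_precedes[OF assms(1) qx] idx_eq_card_precedes[OF assms(2) qy] assms(3,4)
    by (simp add: sum_subtractf sum_distrib_left[symmetric])
  finally show ?thesis by (simp add: bits'_def xs'_def ys'_def)
qed


lemma mtf2_amortized:
  assumes "distinct xs" "distinct ys" "set xs = S" "set ys = S" "set \<sigma> \<subseteq> S"
    "length as = length \<sigma>"
  shows "2 * int (mtf2 full bits xs \<sigma>) \<le> 5 * int (offline_cost full ys \<sigma> as) + Phi S bits xs ys"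
  using assms
proof (induction \<sigma> arbitrary: xs ys bits as)
  case Nil
  then show ?case using Phi_nonneg[of S bits xs ys] by simp
next
  case (Cons q \<sigma>)
  obtain m sws as' where as: "as = (m, sws) # as'" "length as' = length \<sigma>"
    using Cons.prems(6) by (cases as) auto
  define ys1 where "ys1 = foldl (\<lambda>l i. swap i l) ys sws"
  have q: "q \<in> S" "q \<in> set xs" using Cons.prems(3,5) by auto
  have ys1: "Phi S bits xs ys1 \<le> Phi S bits xs ys + 5 * int (length sws)"
      "distinct ys1" "set ys1 = S"
    unfolding ys1_def
    using Phi_swaps[OF Cons.prems(2,4)] distinct_swaps[OF Cons.prems(2)] Cons.prems(4)
    by (simp_all add: set_swaps)
  have q1: "q \<in> set ys1" using ys1(3) q by simp
  have "distinct (mtf2_step bits xs q)" "set (mtf2_step bits xs q) = S"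
    using distinct_mtf2_step[OF Cons.prems(1) q(2)] set_mtf2_step[OF Cons.prems(1) q(2)]
      Cons.prems(3)
    by simp_all
  moreover have "distinct (mvfwd m q ys1)" "set (mvfwd m q ys1) = S"
    using distinct_mvfwd[OF ys1(2) q1] set_mvfwd[OF ys1(2) q1] ys1(3) by simp_all
  moreover have "set \<sigma> \<subseteq> S" using Cons.prems(5) by simp
  ultimately have IH: "2 * int (mtf2 full (bits(q := \<not> bits q)) (mtf2_step bits xs q) \<sigma>)
      \<le> 5 * int (offline_cost full (mvfwd m q ys1) \<sigma> as')
        + Phi S (bits(q := \<not> bits q)) (mtf2_step bits xs q) (mvfwd m q ys1)"
    using Cons.IH as(2) by blast
  have "offline_cost full ys (q # \<sigma>) as
      = length sws + acc_cost full ys1 q + offline_cost full (mvfwd m q ys1) \<sigma> as'"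
    by (simp add: as Let_def ys1_def)
  then show ?case unfolding mtf2_Cons_step
    using IH ys1(1) Phi_access[OF Cons.prems(1) ys1(2) Cons.prems(3) ys1(3) q(1), of bits m]
    by (simp add: acc_cost_def)
qed

text \<open>OPT is attained by some offline algorithm (the set of costs is a nonempty set of
  naturals).\<close>
lemma OPT_attained: "\<exists>as. length as = length \<sigma> \<and> offline_cost full s \<sigma> as = OPT full s \<sigma>"
proof -
  let ?lazy = "replicate (length \<sigma>) (0, [])"
  have "\<exists>c as. length as = length \<sigma> \<and> offline_cost full s \<sigma> as = c"
    by (intro exI[of _ ?lazy] exI) simp
  from LeastI_ex[OF this] show ?thesis unfolding OPT_def by blast
qed

theorem lemma12:
  fixes full :: bool
  shows "\<forall>l::nat. \<exists>b::real. \<forall>(s::'a list) (bits::'a \<Rightarrow> bool) (\<sigma>::'a list).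
           distinct s \<and> length s = l \<and> set \<sigma> \<subseteq> set s \<longrightarrow>
           real (mtf2 full bits s \<sigma>) \<le> 5/2 * real (OPT full s \<sigma>) + b"
proof (intro allI exI impI)
  fix l :: nat and s :: "'a list" and bits :: "'a \<Rightarrow> bool" and \<sigma> :: "'a list"
  assume s: "distinct s \<and> length s = l \<and> set \<sigma> \<subseteq> set s"
  obtain as where as: "length as = length \<sigma>" "offline_cost full s \<sigma> as = OPT full s \<sigma>"
    using OPT_attained by blast
  have "2 * int (mtf2 full bits s \<sigma>) \<le> 5 * int (OPT full s \<sigma>) + Phi (set s) bits s s"
    using mtf2_amortized[of s s "set s" \<sigma> as full bits] s as by auto
  moreover have "Phi (set s) bits s s \<le> 5 * int l * int l"
    using Phi_le[of "set s" bits s s] s distinct_card by metis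
  ultimately have "real_of_int (2 * int (mtf2 full bits s \<sigma>))
      \<le> real_of_int (5 * int (OPT full s \<sigma>) + 5 * int l * int l)"
    unfolding of_int_le_iff by linarith
  then show "real (mtf2 full bits s \<sigma>) \<le> 5/2 * real (OPT full s \<sigma>) + 5/2 * real l * real l"
    by simp
qed

end
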